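(* Let $k\ge1$ and let $G$ be a finite $k$-connected graph with $|V_G|\ge k+1$. Then $k\le \mathrm{Ent}(G)\le \mathrm{Cycl}(G)$.
   Context: Graphs are finite and undirected. A graph is $k$-connected if one must remove at least $k$ vertices to disconnect it (by convention $K_m$, $m\ge3$, has connectivity $m-1$). $\mathrm{Cycl}(G)$ (cyclicity) is the minimum size of a feedback vertex set of the symmetric digraph of $G$ (each edge $uv$ viewed as the two arcs $(u,v),(v,u)$, so each edge forms a directed 2-cycle); equivalently the minimum size of an edge cover set, i.e. a set of vertices containing an endpoint of every edge. Entanglement: in the game $\mathrm{Ent}(G,k)$ Thief plays against $k$ cops. Initially no cop is placed and Thief picks a vertex. Each round, Cops may do nothing, place a new cop (at most $k$ in total) on Thief's current vertex, or move a placed cop to Thief's current vertex; then Thief must move along an edge to an adjacent vertex not occupied by a cop, and is caught (Cops win) if he cannot. Infinite plays are won by Thief. $\mathrm{Ent}(G)$ is the least $k$ for which Cops have a winning strategy. *)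

theory Defs
  imports Main
begin

definition graph :: "'a set \<Rightarrow> ('a \<Rightarrow> 'a \<Rightarrow> bool) \<Rightarrow> bool" where
  "graph V E \<longleftrightarrow> finite V \<and> (\<forall>x y. E x y \<longrightarrow> x \<in> V \<and> y \<in> V)
     \<and> (\<forall>x y. E x y \<longrightarrow> E y x) \<and> (\<forall>x. \<not> E x x)"

definition connected_on :: "'a set \<Rightarrow> ('a \<Rightarrow> 'a \<Rightarrow> bool) \<Rightarrow> bool" where
  "connected_on W E \<longleftrightarrow>
     (\<forall>x\<in>W. \<forall>y\<in>W. (\<lambda>a b. a \<in> W \<and> b \<in> W \<and> E a b)\<^sup>*\<^sup>* x y)"

text \<open>k-connected: more than k vertices and removing fewer than k vertices leaves
  the graph connected (so K_m has connectivity m-1).\<close>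
definition k_connected :: "'a set \<Rightarrow> ('a \<Rightarrow> 'a \<Rightarrow> bool) \<Rightarrow> nat \<Rightarrow> bool" where
  "k_connected V E k \<longleftrightarrow> k < card V \<and>
     (\<forall>S. S \<subseteq> V \<and> card S < k \<longrightarrow> connected_on (V - S) E)"

definition cyclicity :: "'a set \<Rightarrow> ('a \<Rightarrow> 'a \<Rightarrow> bool) \<Rightarrow> nat" where
  "cyclicity V E = (LEAST n. \<exists>C. C \<subseteq> V \<and> card C = n \<and>
      (\<forall>x y. E x y \<longrightarrow> x \<in> C \<or> y \<in> C))"

text \<open>A position is (v, C): Thief's current vertex v and the set C
  of vertices occupied by cops (cops occupy distinct vertices, so card C is the number
  of cops placed so far).\<close>
definition cop_move :: "nat \<Rightarrow> 'a \<Rightarrow> 'a set \<Rightarrow> 'a set \<Rightarrow> bool" where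
  "cop_move k v C C' \<longleftrightarrow> C' = C \<or> (card C < k \<and> C' = insert v C)
     \<or> (\<exists>u\<in>C. C' = insert v (C - {u}))"

text \<open>Histories (list of positions, latest last) consistent with the cop strategy
  sigma, which maps a history to the new cop placement.\<close>
inductive_set histories :: "'a set \<Rightarrow> ('a \<Rightarrow> 'a \<Rightarrow> bool)
    \<Rightarrow> (('a \<times> 'a set) list \<Rightarrow> 'a set) \<Rightarrow> ('a \<times> 'a set) list set"
  for V E \<sigma> where
  start: "v \<in> V \<Longrightarrow> [(v, {})] \<in> histories V E \<sigma>"
| step: "h \<in> histories V E \<sigma> \<Longrightarrow> E (fst (last h)) w \<Longrightarrow> w \<notin> \<sigma> h
          \<Longrightarrow> h @ [(w, \<sigma> h)] \<in> histories V E \<sigma>"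

text \<open>sigma is a winning strategy for k cops: along every consistent history it makes a
  legal move, and there is no infinite play consistent with it (so every play ends with
  Thief unable to move, i.e. caught).\<close>
definition cops_winning_strategy ::
  "'a set \<Rightarrow> ('a \<Rightarrow> 'a \<Rightarrow> bool) \<Rightarrow> nat \<Rightarrow> (('a \<times> 'a set) list \<Rightarrow> 'a set) \<Rightarrow> bool" where
  "cops_winning_strategy V E k \<sigma> \<longleftrightarrow>
     (\<forall>h\<in>histories V E \<sigma>. cop_move k (fst (last h)) (snd (last h)) (\<sigma> h))
     \<and> \<not> (\<exists>p :: nat \<Rightarrow> 'a \<times> 'a set. \<forall>n. map p [0..<Suc n] \<in> histories V E \<sigma>)"

definition cops_win :: "'a set \<Rightarrow> ('a \<Rightarrow> 'a \<Rightarrow> bool) \<Rightarrow> nat \<Rightarrow> bool" where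
  "cops_win V E k \<longleftrightarrow> (\<exists>\<sigma>. cops_winning_strategy V E k \<sigma>)"

definition entanglement :: "'a set \<Rightarrow> ('a \<Rightarrow> 'a \<Rightarrow> bool) \<Rightarrow> nat" where
  "entanglement V E = (LEAST k. cops_win V E k)"

end

theory Submission
  imports Defs
begin

text \<open>Lower bound: in a k-connected graph every vertex has at least k neighbours, so fewer
  than k cops can never block all exits of Thief's vertex and he runs forever.
  Upper bound: given a vertex cover C, the cops put a fresh cop on Thief's vertex whenever
  it lies in C and never move it again. Of any two consecutive vertices of a play one is
  in C, so the cops gain a cop every two rounds, which can happen only card C times.\<close>

lemma histories_last_in_vertices:
  assumes "graph V E" and "h \<in> histories V E \<sigma>"
  shows "fst (last h) \<in> V"
  using assms(2) by induction (use assms(1) in \<open>auto simp: graph_def\<close>)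

lemma infinite_play_step:
  assumes play: "\<And>n. map p [0..<Suc n] \<in> histories V E \<sigma>"
  shows "E (fst (p n)) (fst (p (Suc n)))"
    and "fst (p (Suc n)) \<notin> \<sigma> (map p [0..<Suc n])"
    and "snd (p (Suc n)) = \<sigma> (map p [0..<Suc n])"
proof -
  have "map p [0..<Suc n] @ [p (Suc n)] \<in> histories V E \<sigma>"
    using play[of "Suc n"] by simp
  then show "E (fst (p n)) (fst (p (Suc n)))"
    and "fst (p (Suc n)) \<notin> \<sigma> (map p [0..<Suc n])"
    and "snd (p (Suc n)) = \<sigma> (map p [0..<Suc n])"
    by (auto elim: histories.cases)
qed

text \<open>Thief builds the play greedily; the n-th history of the construction is the
  prefix of length n+1 of the play formed by the last positions.\<close>
lemma infinite_play_if_thief_escapes: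
  assumes "v\<^sub>0 \<in> V"
    and escape: "\<And>h. h \<in> histories V E \<sigma> \<Longrightarrow> \<exists>w. E (fst (last h)) w \<and> w \<notin> \<sigma> h"
  shows "\<exists>p. \<forall>n. map p [0..<Suc n] \<in> histories V E \<sigma>"
proof -
  define next_vertex where "next_vertex h = (SOME w. E (fst (last h)) w \<and> w \<notin> \<sigma> h)" for h
  define H where "H = rec_nat [(v\<^sub>0, {})] (\<lambda>_ h. h @ [(next_vertex h, \<sigma> h)])"
  have H_0: "H 0 = [(v\<^sub>0, {})]" and H_Suc: "H (Suc n) = H n @ [(next_vertex (H n), \<sigma> (H n))]" for n
    by (simp_all add: H_def)
  have H_histories: "H n \<in> histories V E \<sigma>" for n
  proof (induction n)
    case 0
    show ?case using \<open>v\<^sub>0 \<in> V\<close> by (simp add: H_0 histories.start)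
  next
    case (Suc n)
    have "E (fst (last (H n))) (next_vertex (H n)) \<and> next_vertex (H n) \<notin> \<sigma> (H n)"
      unfolding next_vertex_def using escape[OF Suc] by (rule someI_ex)
    then show ?case using Suc by (simp add: H_Suc histories.step)
  qed
  have "map (\<lambda>i. last (H i)) [0..<Suc n] = H n" for n
    by (induction n) (simp_all add: H_0 H_Suc)
  then show ?thesis using H_histories by metis
qed

definition cover_strategy :: "'a set \<Rightarrow> ('a \<times> 'a set) list \<Rightarrow> 'a set" where
  "cover_strategy C h =
     (if fst (last h) \<in> C then insert (fst (last h)) (snd (last h)) else snd (last h))"

lemma cover_strategy_invariant:
  assumes "h \<in> histories V E (cover_strategy C)"
  shows "snd (last h) \<subseteq> C" and "fst (last h) \<notin> snd (last h)"
  using assms by (induction rule: histories.induct) (auto simp: cover_strategy_def)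

lemma cover_strategy_legal:
  assumes "finite C" and h: "h \<in> histories V E (cover_strategy C)"
  shows "cop_move (card C) (fst (last h)) (snd (last h)) (cover_strategy C h)"
proof (cases "fst (last h) \<in> C")
  case True
  then have "snd (last h) \<subset> C"
    using cover_strategy_invariant[OF h] by auto
  then have "card (snd (last h)) < card C"
    using \<open>finite C\<close> by (simp add: psubset_card_mono)
  then show ?thesis using True by (simp add: cop_move_def cover_strategy_def)
next
  case False
  then show ?thesis by (simp add: cop_move_def cover_strategy_def)
qed

lemma cover_strategy_no_infinite_play:
  assumes "finite C" and cover: "\<forall>x y. E x y \<longrightarrow> x \<in> C \<or> y \<in> C"
  shows "\<not> (\<exists>p. \<forall>n. map p [0..<Suc n] \<in> histories V E (cover_strategy C))"
proof
  assume "\<exists>p. \<forall>n. map p [0..<Suc n] \<in> histories V E (cover_strategy C)"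
  then obtain p where play: "\<And>n. map p [0..<Suc n] \<in> histories V E (cover_strategy C)"
    by blast
  let ?cops = "\<lambda>n. snd (p n)"
  have cops_C: "?cops n \<subseteq> C" and thief_free: "fst (p n) \<notin> ?cops n" for n
    using cover_strategy_invariant[OF play[of n]] by simp_all
  have cops_finite: "finite (?cops n)" for n
    using cops_C \<open>finite C\<close> finite_subset by blast
  have cops_Suc: "?cops (Suc n) =
      (if fst (p n) \<in> C then insert (fst (p n)) (?cops n) else ?cops n)" for n
    using infinite_play_step(3)[OF play, of n] by (simp add: cover_strategy_def)
  have card_mono_Suc: "card (?cops n) \<le> card (?cops (Suc n))" for n
    using cops_Suc[of n] cops_finite[of n] by (simp add: card_insert_le)
  have card_grows: "card (?cops n) < card (?cops (Suc n))" if "fst (p n) \<in> C" for n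
    using cops_Suc[of n] that thief_free[of n] cops_finite[of n] by simp
  have card_grows_2: "card (?cops n) < card (?cops (Suc (Suc n)))" for n
  proof -
    have "fst (p n) \<in> C \<or> fst (p (Suc n)) \<in> C"
      using cover infinite_play_step(1)[OF play, of n] by blast
    then show ?thesis
      using card_grows[of n] card_grows[of "Suc n"] card_mono_Suc[of n] card_mono_Suc[of "Suc n"]
      by linarith
  qed
  have "m \<le> card (?cops (2 * m))" for m
  proof (induction m)
    case (Suc m)
    then show ?case using card_grows_2[of "2 * m"] by simp
  qed simp
  moreover have "card (?cops n) \<le> card C" for n
    using cops_C \<open>finite C\<close> by (rule card_mono[rotated])
  ultimately show False
    by (metis Suc_n_not_le_n order.trans)
qed

lemma cops_win_vertex_cover:
  assumes "graph V E" and "C \<subseteq> V" and "\<forall>x y. E x y \<longrightarrow> x \<in> C \<or> y \<in> C"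
  shows "cops_win V E (card C)"
proof -
  have "finite C" using assms(1,2) by (auto simp: graph_def intro: finite_subset)
  then have "cops_winning_strategy V E (card C) (cover_strategy C)"
    unfolding cops_winning_strategy_def
    using cover_strategy_legal cover_strategy_no_infinite_play[OF _ assms(3)] by blast
  then show ?thesis unfolding cops_win_def by blast
qed

lemma cyclicity_attained:
  assumes "graph V E"
  obtains C where "C \<subseteq> V" and "card C = cyclicity V E"
    and "\<forall>x y. E x y \<longrightarrow> x \<in> C \<or> y \<in> C"
proof -
  let ?cover_of_size = "\<lambda>n. \<exists>C. C \<subseteq> V \<and> card C = n \<and> (\<forall>x y. E x y \<longrightarrow> x \<in> C \<or> y \<in> C)"
  have "?cover_of_size (card V)" using assms by (auto simp: graph_def)
  then have "?cover_of_size (cyclicity V E)"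
    unfolding cyclicity_def by (rule LeastI)
  then show ?thesis using that by blast
qed

lemma cops_win_cyclicity:
  assumes "graph V E"
  shows "cops_win V E (cyclicity V E)"
  using cyclicity_attained[OF assms] cops_win_vertex_cover[OF assms] by metis

lemma entanglement_le_cyclicity: "graph V E \<Longrightarrow> entanglement V E \<le> cyclicity V E"
  unfolding entanglement_def by (rule Least_le) (rule cops_win_cyclicity)

lemma cops_win_entanglement: "graph V E \<Longrightarrow> cops_win V E (entanglement V E)"
  unfolding entanglement_def by (rule LeastI) (rule cops_win_cyclicity)

text \<open>If v had fewer than k neighbours, deleting them would leave v isolated next to at
  least one further vertex, since card V > k.\<close>
lemma k_connected_degree_ge:
  assumes g: "graph V E" and kc: "k_connected V E k" and "v \<in> V"
  shows "k \<le> card {w. E v w}"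
proof (rule ccontr)
  let ?N = "{w. E v w}"
  assume "\<not> k \<le> card ?N"
  have N_V: "?N \<subseteq> V" and "finite V" using g by (auto simp: graph_def)
  have con: "connected_on (V - ?N) E"
    using kc N_V \<open>\<not> k \<le> card ?N\<close> by (simp add: k_connected_def)
  have v_in: "v \<in> V - ?N" using \<open>v \<in> V\<close> g by (simp add: graph_def)
  have "card (V - ?N) = card V - card ?N"
    using N_V \<open>finite V\<close> by (meson card_Diff_subset finite_subset)
  moreover have "k < card V" using kc by (simp add: k_connected_def)
  ultimately have "\<not> card (V - ?N) \<le> Suc 0"
    using \<open>\<not> k \<le> card ?N\<close> by linarith
  then obtain u where u: "u \<in> V - ?N" "u \<noteq> v"
    using v_in \<open>finite V\<close> by (metis card_le_Suc0_iff_eq finite_Diff)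
  have "(\<lambda>a b. a \<in> V - ?N \<and> b \<in> V - ?N \<and> E a b)\<^sup>*\<^sup>* v u"
    using con v_in u(1) by (simp add: connected_on_def)
  then show False
    by (cases rule: converse_rtranclpE) (use u in auto)
qed

lemma cop_move_card_le:
  assumes "cop_move j v C C'" and "finite C" and "card C \<le> j"
  shows "finite C' \<and> card C' \<le> j"
proof -
  consider "C' = C" | "card C < j" "C' = insert v C" | u where "u \<in> C" "C' = insert v (C - {u})"
    using assms(1) unfolding cop_move_def by blast
  then show ?thesis
  proof cases
    case 3
    have "card (insert v (C - {u})) \<le> Suc (card (C - {u}))"
      using \<open>finite C\<close> by (simp add: card_insert_if)
    also have "\<dots> = card C"
      using \<open>finite C\<close> \<open>u \<in> C\<close> by (rule card_Suc_Diff1)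
    finally show ?thesis using 3 assms(2,3) by simp
  qed (use assms(2,3) in \<open>simp_all add: card_insert_if\<close>)
qed

lemma histories_cops_card_le:
  assumes legal: "\<forall>h\<in>histories V E \<sigma>. cop_move j (fst (last h)) (snd (last h)) (\<sigma> h)"
    and "h \<in> histories V E \<sigma>"
  shows "finite (snd (last h)) \<and> card (snd (last h)) \<le> j"
  using assms(2)
proof induction
  case (step h w)
  then show ?case
    using cop_move_card_le[OF legal[rule_format, OF step.hyps(1)]] by simp
qed simp

lemma k_connected_not_cops_win:
  assumes g: "graph V E" and kc: "k_connected V E k" and "j < k"
  shows "\<not> cops_win V E j"
proof
  assume "cops_win V E j"
  then obtain \<sigma> where legal: "\<forall>h\<in>histories V E \<sigma>. cop_move j (fst (last h)) (snd (last h)) (\<sigma> h)"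
    and no_play: "\<not> (\<exists>p. \<forall>n. map p [0..<Suc n] \<in> histories V E \<sigma>)"
    unfolding cops_win_def cops_winning_strategy_def by blast
  have escape: "\<exists>w. E (fst (last h)) w \<and> w \<notin> \<sigma> h" if h: "h \<in> histories V E \<sigma>" for h
  proof -
    have cops: "finite (\<sigma> h)" "card (\<sigma> h) \<le> j"
      using cop_move_card_le[OF legal[rule_format, OF h]] histories_cops_card_le[OF legal h]
      by simp_all
    have "k \<le> card {w. E (fst (last h)) w}"
      using k_connected_degree_ge[OF g kc histories_last_in_vertices[OF g h]] .
    then have "\<not> {w. E (fst (last h)) w} \<subseteq> \<sigma> h"
      using \<open>j < k\<close> card_mono[OF cops(1)] cops(2) by (meson leD order.trans)
    then show ?thesis by blast
  qed
  have "V \<noteq> {}" using kc by (auto simp: k_connected_def)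
  then obtain v\<^sub>0 where "v\<^sub>0 \<in> V" by blast
  with infinite_play_if_thief_escapes[of v\<^sub>0 V E \<sigma>] escape no_play show False by blast
qed

theorem mainTheorem7:
  fixes V :: "'a set" and E :: "'a \<Rightarrow> 'a \<Rightarrow> bool" and k :: nat
  assumes "graph V E" and "1 \<le> k" and "k_connected V E k" and "k + 1 \<le> card V"
  shows "k \<le> entanglement V E \<and> entanglement V E \<le> cyclicity V E"
proof
  show "k \<le> entanglement V E"
    using k_connected_not_cops_win[OF assms(1,3)] cops_win_entanglement[OF assms(1)]
    by (meson not_le)
  show "entanglement V E \<le> cyclicity V E"
    using entanglement_le_cyclicity[OF assms(1)] .
qed

end
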